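(* Let $r\ge2$ be an integer. The following four families span the same (finite-dimensional) linear space of functions on $\mathcal G_H$: (1) $\psi^{0,H}_{r-2p,-p}$ for $1\le p\le\lfloor r/2\rfloor$; (2) $I_{r-2p,2p}$ for $1\le p\le\lfloor r/2\rfloor$; (3) $\xi^{2p}w^{r-2p}$ for $1\le p\le\lfloor r/2\rfloor$; (4) $\xi^2w^{r-2p}(w^2-4\xi^2)^{p-1}$ for $1\le p\le\lfloor r/2\rfloor$.
   Context: $\mathcal G_H=\mathbb R/2\pi\mathbb Z\times\mathbb R$ parametrizes unit-speed geodesics of the Poincaré disk ($\{|z|<1\}$, metric $4|dz|^2/(1-|z|^2)^2$) by $z_{\beta,a}(t)=e^{i\beta}\frac{(2+ia)\tanh(t/2)+ia}{ia\tanh(t/2)-2+ia}$. $I_{p,q}(\beta,a)=\int_{\mathbb R}z_{\beta,a}(t)^p\dot z_{\beta,a}(t)^qdt$. With $\omega=\beta+\tan^{-1}a+\pi/2$ and $\mu_H=(1+a^2)^{-1/2}$: $w=-a\mu_He^{i\omega}$, $\xi=\frac i2\mu_He^{i\omega}$. For $n\in\mathbb N_0$, $k\in\mathbb Z$, $\psi^{0,H}_{n,k}(\beta,a)=\mu_H^2e^{i(n-2k)\omega}p_n\!\big(a/\sqrt{1+a^2}\big)$, where $p_n$ is the multiple of the Jacobi polynomial $P_n^{(1/2,1/2)}$ (equivalently of the Chebyshev polynomial $U_n$) normalized by $\int_{-1}^1p_n(t)^2(1-t^2)^{1/2}dt=(2\pi)^{-1}$. *)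

theory Defs
  imports "HOL-Analysis.Analysis"
begin

text \<open>Geodesics of the Poincare disk, parametrized by (beta, a) in R x R
  (beta is understood modulo 2 pi; all functions below are 2pi-periodic in beta).\<close>

definition zH :: "real \<Rightarrow> real \<Rightarrow> real \<Rightarrow> complex" where
  "zH \<beta> a t = cis \<beta> *
     (((2 + \<i> * of_real a) * of_real (tanh (t/2)) + \<i> * of_real a) /
      (\<i> * of_real a * of_real (tanh (t/2)) - 2 + \<i> * of_real a))"

definition zH_dot :: "real \<Rightarrow> real \<Rightarrow> real \<Rightarrow> complex" where
  "zH_dot \<beta> a t = vector_derivative (zH \<beta> a) (at t)"

definition I_H :: "nat \<Rightarrow> nat \<Rightarrow> real \<times> real \<Rightarrow> complex" where
  "I_H p q = (\<lambda>(\<beta>, a). integral UNIV (\<lambda>t. zH \<beta> a t ^ p * zH_dot \<beta> a t ^ q))"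

definition omegaH :: "real \<Rightarrow> real \<Rightarrow> real" where
  "omegaH \<beta> a = \<beta> + arctan a + pi / 2"

definition muH :: "real \<Rightarrow> real" where
  "muH a = 1 / sqrt (1 + a\<^sup>2)"

definition wH :: "real \<times> real \<Rightarrow> complex" where
  "wH = (\<lambda>(\<beta>, a). - of_real (a * muH a) * cis (omegaH \<beta> a))"

definition xiH :: "real \<times> real \<Rightarrow> complex" where
  "xiH = (\<lambda>(\<beta>, a). (\<i> / 2) * of_real (muH a) * cis (omegaH \<beta> a))"

fun chebU :: "nat \<Rightarrow> real \<Rightarrow> real" where
  "chebU 0 t = 1"
| "chebU (Suc 0) t = 2 * t"
| "chebU (Suc (Suc n)) t = 2 * t * chebU (Suc n) t - chebU n t"

text \<open>p_n: the multiple of U_n with integral_{-1}^1 p_n^2 (1-t^2)^{1/2} dt = 1/(2 pi).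
  Since integral_{-1}^1 U_n^2 (1-t^2)^{1/2} dt = pi/2, this is p_n = U_n / pi
  (positive multiple chosen).\<close>
definition pH :: "nat \<Rightarrow> real \<Rightarrow> real" where
  "pH n t = chebU n t / pi"

definition psiH :: "nat \<Rightarrow> int \<Rightarrow> real \<times> real \<Rightarrow> complex" where
  "psiH n k = (\<lambda>(\<beta>, a). of_real ((muH a)\<^sup>2) * cis ((of_nat n - 2 * of_int k) * omegaH \<beta> a)
                * of_real (pH n (a / sqrt (1 + a\<^sup>2))))"

definition fam_span :: "(nat \<Rightarrow> 'a \<Rightarrow> complex) \<Rightarrow> nat set \<Rightarrow> ('a \<Rightarrow> complex) set" where
  "fam_span g P = {f. \<exists>c :: nat \<Rightarrow> complex. f = (\<lambda>x. \<Sum>p\<in>P. c p * g p x)}"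

end

theory Submission
  imports Defs "HOL-Complex_Analysis.Cauchy_Integral_Theorem" "HOL-Real_Asymp.Real_Asymp"
begin

(* Along the geodesic z = w + 2 xi S, where S(t) = moebius (i a - 2) (i a) (i a) (i a - 2) (tanh (t/2))
   is a Moebius image of tanh(t/2) fixing 1 and -1: S runs from -1 to 1, dS/dt = (1 - S^2)/2 and
   dz/dt = xi (1 - S^2). Substituting s = S(t) turns I_{p,q} into
   2 xi^q * integral_{-1}^{1} (w + 2 xi s)^p (1 - s^2)^(q-1) ds, whose binomial expansion (odd moments
   vanish) writes I_{r-2p,2p} as a combination of the xi^(2m) w^(r-2m) with m >= p and a nonzero
   coefficient at m = p. Since w^2 - 4 xi^2 = e^(2 i omega), family (4) consists of multiples of
   mu^2 e^(i r omega) (a mu)^(r-2m), while psi^{0,H}_{r-2p,-p} = mu^2 e^(i r omega) U_{r-2p}(a mu)/pi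
   and U_n is a combination of the x^(n-2k) with leading coefficient 2^n. Family (4) arises from
   family (3) by expanding (w^2 - 4 xi^2)^(p-1). All three changes of family are triangular with
   nonzero diagonal, hence preserve the span. *)

section \<open>Spans and triangular changes of family\<close>

lemma fam_span_add:
  assumes "u \<in> fam_span g P" "v \<in> fam_span g P"
  shows "(\<lambda>x. c * u x + v x) \<in> fam_span g P"
proof -
  obtain cu cv where "u = (\<lambda>x. \<Sum>p\<in>P. cu p * g p x)" "v = (\<lambda>x. \<Sum>p\<in>P. cv p * g p x)"
    using assms unfolding fam_span_def by blast
  then have "(\<lambda>x. c * u x + v x) = (\<lambda>x. \<Sum>p\<in>P. (c * cu p + cv p) * g p x)"
    by (simp add: sum_distrib_left sum.distrib algebra_simps)
  then show ?thesis unfolding fam_span_def by (intro CollectI exI)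
qed

lemma fam_span_sum:
  assumes "\<And>m. m \<in> Q \<Longrightarrow> h m \<in> fam_span g P"
  shows "(\<lambda>x. \<Sum>m\<in>Q. c m * h m x) \<in> fam_span g P"
proof -
  obtain d where d: "\<And>m. m \<in> Q \<Longrightarrow> h m = (\<lambda>x. \<Sum>p\<in>P. d m p * g p x)"
    using assms unfolding fam_span_def mem_Collect_eq by metis
  have "(\<Sum>m\<in>Q. c m * h m x) = (\<Sum>p\<in>P. (\<Sum>m\<in>Q. c m * d m p) * g p x)" for x
  proof -
    have "(\<Sum>m\<in>Q. c m * h m x) = (\<Sum>m\<in>Q. \<Sum>p\<in>P. c m * d m p * g p x)"
      by (simp add: d sum_distrib_left mult.assoc)
    also have "\<dots> = (\<Sum>p\<in>P. (\<Sum>m\<in>Q. c m * d m p) * g p x)"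
      by (simp add: sum.swap[of _ Q] sum_distrib_right)
    finally show ?thesis .
  qed
  then show ?thesis unfolding fam_span_def by (intro CollectI exI) (rule ext)
qed

lemma fam_span_generator:
  assumes "finite P" "p \<in> P"
  shows "g p \<in> fam_span g P"
proof -
  have "g p = (\<lambda>x. \<Sum>m\<in>P. of_bool (m = p) * g m x)"
    using assms by simp
  then show ?thesis unfolding fam_span_def by (intro CollectI exI)
qed

lemma fam_span_subset:
  assumes "\<And>p. p \<in> P \<Longrightarrow> f p \<in> fam_span g P"
  shows "fam_span f P \<subseteq> fam_span g P"
  using fam_span_sum[of P f g] assms unfolding fam_span_def by blast

definition triangular_combination ::
    "(nat \<Rightarrow> 'a \<Rightarrow> complex) \<Rightarrow> (nat \<Rightarrow> 'a \<Rightarrow> complex) \<Rightarrow> (nat \<Rightarrow> nat) \<Rightarrow> nat set \<Rightarrow> bool" where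
  "triangular_combination f g \<rho> P \<longleftrightarrow> (\<exists>T. \<forall>p\<in>P. f p = (\<lambda>x. \<Sum>m\<in>P. T p m * g m x)
     \<and> T p p \<noteq> 0 \<and> (\<forall>m\<in>P. T p m \<noteq> 0 \<longrightarrow> m = p \<or> \<rho> m < \<rho> p))"

lemma triangular_combinationI:
  assumes "\<And>p. p \<in> P \<Longrightarrow> f p = (\<lambda>x. \<Sum>m\<in>P. T p m * g m x)"
    and "\<And>p. p \<in> P \<Longrightarrow> T p p \<noteq> 0"
    and "\<And>p m. p \<in> P \<Longrightarrow> m \<in> P \<Longrightarrow> T p m \<noteq> 0 \<Longrightarrow> m \<noteq> p \<Longrightarrow> \<rho> m < \<rho> p"
  shows "triangular_combination f g \<rho> P"
  using assms unfolding triangular_combination_def by blast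

lemma fam_span_eq_if_triangular:
  assumes "finite P" "triangular_combination f g \<rho> P"
  shows "fam_span f P = fam_span g P"
proof -
  obtain T where f: "\<And>p. p \<in> P \<Longrightarrow> f p = (\<lambda>x. \<Sum>m\<in>P. T p m * g m x)"
    and diag: "\<And>p. p \<in> P \<Longrightarrow> T p p \<noteq> 0"
    and tri: "\<And>p m. p \<in> P \<Longrightarrow> m \<in> P \<Longrightarrow> T p m \<noteq> 0 \<Longrightarrow> m = p \<or> \<rho> m < \<rho> p"
    using assms(2) unfolding triangular_combination_def by blast
  have "f p \<in> fam_span g P" if "p \<in> P" for p
    unfolding f[OF that] by (rule fam_span_sum) (rule fam_span_generator[OF assms(1)])
  moreover have "g p \<in> fam_span f P" if "p \<in> P" for p
    using that
  proof (induction "\<rho> p" arbitrary: p rule: less_induct)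
    case less
    define Q where "Q = {m \<in> P - {p}. T p m \<noteq> 0}"
    have "f p x = T p p * g p x + (\<Sum>m\<in>Q. T p m * g m x)" for x
    proof -
      have "f p x = (\<Sum>m\<in>P. T p m * g m x)"
        using f[OF less.prems] by simp
      also have "\<dots> = T p p * g p x + (\<Sum>m\<in>P - {p}. T p m * g m x)"
        by (rule sum.remove[OF assms(1) less.prems])
      also have "(\<Sum>m\<in>P - {p}. T p m * g m x) = (\<Sum>m\<in>Q. T p m * g m x)"
        by (rule sum.mono_neutral_right) (use assms(1) in \<open>auto simp: Q_def\<close>)
      finally show ?thesis .
    qed
    moreover have "(\<Sum>m\<in>Q. (- T p m / T p p) * g m x) = - (\<Sum>m\<in>Q. T p m * g m x) / T p p" for x
      by (simp add: sum_divide_distrib sum_negf)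
    ultimately have gp: "g p = (\<lambda>x. 1 / T p p * f p x + (\<Sum>m\<in>Q. (- T p m / T p p) * g m x))"
      using diag[OF less.prems] by (simp add: field_simps)
    have "g m \<in> fam_span f P" if "m \<in> Q" for m
      using that tri[OF less.prems] by (intro less.hyps) (auto simp: Q_def)
    then have "(\<lambda>x. \<Sum>m\<in>Q. (- T p m / T p p) * g m x) \<in> fam_span f P"
      by (rule fam_span_sum)
    then show ?case
      unfolding gp by (rule fam_span_add[OF fam_span_generator[OF assms(1) less.prems]])
  qed
  ultimately show ?thesis
    by (intro equalityI fam_span_subset)
qed

lemma sum_atMost_even_terms:
  fixes c :: "nat \<Rightarrow> 'a::comm_monoid_add"
  assumes "\<And>j. odd j \<Longrightarrow> c j = 0"
  shows "(\<Sum>j\<le>n. c j) = (\<Sum>k\<le>n div 2. c (2*k))"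
proof (induction n)
  case (Suc n)
  show ?case
  proof (cases "even (Suc n)")
    case True
    then have "Suc n div 2 = Suc (n div 2)" "Suc (Suc (2 * (n div 2))) = Suc n"
      by presburger+
    then show ?thesis using Suc.IH by simp
  next
    case False
    then have "Suc n div 2 = n div 2" by presburger
    then show ?thesis using Suc.IH assms[OF False] by simp
  qed
qed simp

lemma sum_atMost_shift_eq_superset:
  fixes h :: "nat \<Rightarrow> 'a::comm_monoid_add"
  assumes "finite A" "{a..a+n} \<subseteq> A" "\<And>m. m \<in> A - {a..a+n} \<Longrightarrow> h m = 0"
  shows "(\<Sum>k\<le>n. h (a + k)) = (\<Sum>m\<in>A. h m)"
proof -
  have "(\<Sum>k\<le>n. h (a + k)) = (\<Sum>m\<in>{a..a+n}. h m)"
    using sum.shift_bounds_cl_nat_ivl[of h 0 a n] by (simp add: atLeast0AtMost add.commute)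
  also have "\<dots> = (\<Sum>m\<in>A. h m)"
    by (rule sum.mono_neutral_left) (use assms in auto)
  finally show ?thesis .
qed

section \<open>The geodesic as a Moebius image of tanh\<close>

lemma one_plus_minus_i_real_nonzero: "1 + \<i> * of_real a \<noteq> 0" "1 - \<i> * of_real a \<noteq> 0"
  by (simp_all add: complex_eq_iff)

lemma muH_cis_omegaH: "of_real (muH a) * cis (omegaH \<beta> a) = \<i> * cis \<beta> / (1 - \<i> * of_real a)"
proof -
  define s where "s = (of_real (sqrt (1 + a\<^sup>2)) :: complex)"
  have sq: "s * s = (1 + \<i> * of_real a) * (1 - \<i> * of_real a)"
    unfolding s_def by (simp flip: of_real_mult) (simp add: algebra_simps power2_eq_square)
  have "cis (omegaH \<beta> a) = cis \<beta> * cis (arctan a) * \<i>"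
    by (simp add: omegaH_def cis_mult[symmetric])
  also have "cis (arctan a) = (1 + \<i> * of_real a) / s"
    by (simp add: s_def complex_eq_iff cos_arctan sin_arctan)
  finally have "of_real (muH a) * cis (omegaH \<beta> a) = (1 + \<i> * of_real a) * (\<i> * cis \<beta>) / (s * s)"
    by (simp add: muH_def s_def)
  also have "\<dots> = \<i> * cis \<beta> / (1 - \<i> * of_real a)"
    unfolding sq by (rule nonzero_mult_divide_mult_cancel_left[OF one_plus_minus_i_real_nonzero(1)])
  finally show ?thesis .
qed

lemma wH_eq: "wH (\<beta>, a) = - \<i> * of_real a * cis \<beta> / (1 - \<i> * of_real a)"
  using muH_cis_omegaH[of a \<beta>] unfolding wH_def
  by (simp add: mult.assoc mult.left_commute[of "of_real a"])

lemma xiH_eq: "xiH (\<beta>, a) = - cis \<beta> / (2 * (1 - \<i> * of_real a))"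
  using muH_cis_omegaH[of a \<beta>] unfolding xiH_def by (simp add: mult.assoc)

lemma moebius_sym_one: "\<alpha> + \<beta> \<noteq> 0 \<Longrightarrow> moebius \<alpha> \<beta> \<beta> \<alpha> 1 = 1"
  by (simp add: moebius_def add.commute)

lemma moebius_sym_minus_one:
  assumes "\<alpha> - \<beta> \<noteq> 0"
  shows "moebius \<alpha> \<beta> \<beta> \<alpha> (-1) = -1"
proof -
  have "\<beta> * - 1 + \<alpha> = - (\<alpha> * - 1 + \<beta>)" "\<beta> * - 1 + \<alpha> \<noteq> 0"
    using assms by simp_all
  then show ?thesis
    unfolding moebius_def by (metis divide_minus_right divide_self neg_0_equal_iff_equal)
qed

lemma one_minus_moebius_sym_sq:
  fixes \<alpha> \<beta> z :: "'a::field"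
  assumes "\<beta> * z + \<alpha> \<noteq> 0"
  shows "1 - moebius \<alpha> \<beta> \<beta> \<alpha> z ^ 2 = (\<alpha>^2 - \<beta>^2) * (1 - z^2) / (\<beta> * z + \<alpha>)^2"
proof -
  have "1 - moebius \<alpha> \<beta> \<beta> \<alpha> z ^ 2 = ((\<beta> * z + \<alpha>)^2 - (\<alpha> * z + \<beta>)^2) / (\<beta> * z + \<alpha>)^2"
    using assms by (simp add: moebius_def power_divide diff_divide_distrib)
  also have "(\<beta> * z + \<alpha>)^2 - (\<alpha> * z + \<beta>)^2 = (\<alpha>^2 - \<beta>^2) * (1 - z^2)"
    by (simp add: power2_eq_square algebra_simps)
  finally show ?thesis .
qed

lemma has_field_derivative_moebius_sym:
  fixes \<alpha> \<beta> z :: complex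
  assumes "\<beta> * z + \<alpha> \<noteq> 0"
  shows "(moebius \<alpha> \<beta> \<beta> \<alpha> has_field_derivative (\<alpha>^2 - \<beta>^2) / (\<beta> * z + \<alpha>)^2) (at z)"
proof -
  have "((\<lambda>z. \<alpha> * z + \<beta>) has_field_derivative \<alpha>) (at z)" "((\<lambda>z. \<beta> * z + \<alpha>) has_field_derivative \<beta>) (at z)"
    by (auto intro!: derivative_eq_intros)
  from DERIV_divide[OF this assms]
  show ?thesis
    unfolding moebius_def by (simp add: power2_eq_square algebra_simps)
qed

definition sH :: "real \<Rightarrow> real \<Rightarrow> complex" where
  "sH a t = moebius (\<i> * of_real a - 2) (\<i> * of_real a) (\<i> * of_real a) (\<i> * of_real a - 2)
     (of_real (tanh (t / 2)))"

lemma sH_denominator_nonzero: "\<i> * of_real a * of_real x + (\<i> * of_real a - 2) \<noteq> 0"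
  by (simp add: complex_eq_iff)

lemma zH_eq: "zH \<beta> a t = wH (\<beta>, a) + 2 * xiH (\<beta>, a) * sH a t"
proof -
  define A where "A = \<i> * of_real a"
  define \<tau> where "\<tau> = (of_real (tanh (t / 2)) :: complex)"
  define D where "D = A * \<tau> + (A - 2)"
  define c where "c = - cis \<beta>"
  have D: "D \<noteq> 0"
    unfolding D_def A_def \<tau>_def by (rule sH_denominator_nonzero)
  have A: "1 - A \<noteq> 0"
    unfolding A_def by (rule one_plus_minus_i_real_nonzero)
  have w: "wH (\<beta>, a) = c / (1 - A) * A"
    by (simp add: wH_eq A_def c_def)
  have x: "2 * xiH (\<beta>, a) = c / (1 - A)"
    unfolding xiH_eq A_def[symmetric] c_def
    by (simp only: times_divide_eq_right mult_divide_mult_cancel_left_if) simp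
  have "A + sH a t = (A * D + ((A - 2) * \<tau> + A)) / D"
    using D by (simp add: sH_def moebius_def A_def D_def \<tau>_def add_divide_distrib)
  also have "A * D + ((A - 2) * \<tau> + A) = (1 - A) * (- ((2 + A) * \<tau>) - A)"
    by (simp add: D_def algebra_simps)
  finally have AS: "A + sH a t = (1 - A) * (- ((2 + A) * \<tau>) - A) / D" .
  have "wH (\<beta>, a) + 2 * xiH (\<beta>, a) * sH a t = c / (1 - A) * (A + sH a t)"
    unfolding w x by (simp only: distrib_left)
  also have "\<dots> = c / (1 - A) * ((1 - A) * (- ((2 + A) * \<tau>) - A) / D)"
    unfolding AS ..
  also have "\<dots> = c * (- ((2 + A) * \<tau>) - A) / D"
    using A by simp
  also have "\<dots> = zH \<beta> a t"
    unfolding zH_def A_def \<tau>_def D_def c_def by (simp add: algebra_simps)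
  finally show ?thesis ..
qed

lemma sH_has_vector_derivative: "(sH a has_vector_derivative (1 - sH a t ^ 2) / 2) (at t)"
proof -
  define \<alpha> \<beta> where "\<alpha> = \<i> * of_real a - 2" and "\<beta> = \<i> * (of_real a :: complex)"
  have den: "\<beta> * of_real (tanh (t / 2)) + \<alpha> \<noteq> 0"
    unfolding \<alpha>_def \<beta>_def by (rule sH_denominator_nonzero)
  have "((\<lambda>t. of_real (tanh (t / 2)) :: complex) has_vector_derivative of_real ((1 - tanh (t / 2)^2) / 2)) (at t)"
    by (rule has_vector_derivative_of_real) (rule derivative_eq_intros refl | simp)+
  then have chain: "((moebius \<alpha> \<beta> \<beta> \<alpha> \<circ> (\<lambda>t. of_real (tanh (t / 2)))) has_vector_derivative
      of_real ((1 - tanh (t / 2)^2) / 2) * ((\<alpha>^2 - \<beta>^2) / (\<beta> * of_real (tanh (t / 2)) + \<alpha>)^2)) (at t)"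
    by (rule field_vector_diff_chain_at) (rule has_field_derivative_moebius_sym[OF den])
  have eq: "of_real ((1 - tanh (t / 2)^2) / 2) * ((\<alpha>^2 - \<beta>^2) / (\<beta> * of_real (tanh (t / 2)) + \<alpha>)^2)
      = (1 - sH a t ^ 2) / 2"
    using one_minus_moebius_sym_sq[OF den] by (simp add: sH_def \<alpha>_def \<beta>_def mult_ac)
  have comp: "sH a = moebius \<alpha> \<beta> \<beta> \<alpha> \<circ> (\<lambda>t. of_real (tanh (t / 2)))"
    by (simp add: fun_eq_iff sH_def \<alpha>_def \<beta>_def)
  show ?thesis
    using chain unfolding eq comp .
qed

lemma tendsto_sH:
  assumes "((\<lambda>t. tanh (t / 2)) \<longlongrightarrow> x) F"
  shows "(sH a \<longlongrightarrow> moebius (\<i> * of_real a - 2) (\<i> * of_real a) (\<i> * of_real a) (\<i> * of_real a - 2) (of_real x)) F"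
  unfolding sH_def[abs_def]
  by (rule isCont_tendsto_compose[OF DERIV_isCont[OF has_field_derivative_moebius_sym[OF sH_denominator_nonzero]]])
     (rule tendsto_of_real[OF assms])

lemma sH_tendsto_at_top: "(sH a \<longlongrightarrow> 1) at_top"
proof -
  have "((\<lambda>t::real. tanh (t / 2)) \<longlongrightarrow> 1) at_top"
    by (rule filterlim_compose[OF tanh_real_at_top]) real_asymp
  from tendsto_sH[OF this, of a] show ?thesis
    by (simp add: moebius_sym_one complex_eq_iff)
qed

lemma sH_tendsto_at_bot: "(sH a \<longlongrightarrow> -1) at_bot"
proof -
  have "((\<lambda>t::real. tanh (t / 2)) \<longlongrightarrow> -1) at_bot"
    by (rule filterlim_compose[OF tanh_real_at_bot]) real_asymp
  from tendsto_sH[OF this, of a] show ?thesis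
    by (simp add: moebius_sym_minus_one complex_eq_iff)
qed

lemma zH_dot_eq: "zH_dot \<beta> a t = xiH (\<beta>, a) * (1 - sH a t ^ 2)"
proof -
  have "zH \<beta> a = (\<lambda>t. wH (\<beta>, a) + 2 * xiH (\<beta>, a) * sH a t)"
    using zH_eq by blast
  moreover have "((\<lambda>t. wH (\<beta>, a) + 2 * xiH (\<beta>, a) * sH a t) has_vector_derivative
      0 + 2 * xiH (\<beta>, a) * ((1 - sH a t ^ 2) / 2)) (at t)"
    by (intro has_vector_derivative_add has_vector_derivative_const has_vector_derivative_mult_right
        sH_has_vector_derivative)
  ultimately show ?thesis
    unfolding zH_dot_def by (simp add: vector_derivative_at)
qed

section \<open>The integrals I_{p,q}\<close>

lemma fundamental_theorem_of_calculus_UNIV: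
  fixes G :: "real \<Rightarrow> 'a::banach"
  assumes G': "\<And>t. (G has_vector_derivative g t) (at t)"
    and top: "(G \<longlongrightarrow> L1) at_top" and bot: "(G \<longlongrightarrow> L0) at_bot"
  shows "(g has_integral (L1 - L0)) UNIV"
proof -
  have "\<not> (\<exists>a b. (UNIV :: real set) = cbox a b)"
    by (metis bounded_cbox not_bounded_UNIV)
  moreover have "\<exists>B>0. \<forall>a b. ball 0 B \<subseteq> cbox a b \<longrightarrow>
      (\<exists>z. ((\<lambda>x. if x \<in> UNIV then g x else 0) has_integral z) (cbox a b) \<and> norm (z - (L1 - L0)) < e)"
    if e: "e > 0" for e
  proof -
    obtain B1 where B1: "\<And>x. x \<ge> B1 \<Longrightarrow> norm (G x - L1) < e / 2"
      using tendstoD[OF top, of "e / 2"] e unfolding eventually_at_top_linorder dist_norm by auto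
    obtain B0 where B0: "\<And>x. x \<le> B0 \<Longrightarrow> norm (G x - L0) < e / 2"
      using tendstoD[OF bot, of "e / 2"] e unfolding eventually_at_bot_linorder dist_norm by auto
    define B where "B = \<bar>B0\<bar> + \<bar>B1\<bar> + 1"
    show ?thesis
    proof (intro exI[of _ B] conjI allI impI)
      show "B > 0"
        unfolding B_def by simp
      fix a b :: real
      assume "ball 0 B \<subseteq> cbox a b"
      moreover have "B0 \<in> ball 0 B" "B1 \<in> ball 0 B"
        unfolding B_def by (simp_all add: dist_real_def)
      ultimately have ab: "a \<le> B0" "B1 \<le> b" "a \<le> b"
        by (auto simp: cbox_interval subset_iff)
      have "(g has_integral G b - G a) {a..b}"
        by (rule fundamental_theorem_of_calculus[OF \<open>a \<le> b\<close>])
          (rule has_vector_derivative_at_within[OF G'])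
      moreover have "norm ((G b - G a) - (L1 - L0)) < e"
      proof -
        have "(G b - G a) - (L1 - L0) = (G b - L1) - (G a - L0)"
          by (simp add: algebra_simps)
        then have "norm ((G b - G a) - (L1 - L0)) \<le> norm (G b - L1) + norm (G a - L0)"
          by (metis norm_triangle_ineq4)
        also have "\<dots> < e"
          using B1[OF ab(2)] B0[OF ab(1)] by linarith
        finally show ?thesis .
      qed
      ultimately show "\<exists>z. ((\<lambda>x. if x \<in> UNIV then g x else 0) has_integral z) (cbox a b) \<and> norm (z - (L1 - L0)) < e"
        by (intro exI[of _ "G b - G a"]) (simp add: cbox_interval)
    qed
  qed
  ultimately show ?thesis
    by (subst has_integral_alt) simp
qed

lemma I_H_eq_segment_integral:
  assumes "q \<ge> 1"
  shows "I_H p q (\<beta>, a) = 2 * xiH (\<beta>, a) ^ q *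
    integral {-1..1} (\<lambda>s. (wH (\<beta>, a) + 2 * xiH (\<beta>, a) * of_real s) ^ p * (1 - of_real s ^ 2) ^ (q - 1))"
proof -
  obtain k where q: "q = Suc k"
    using assms by (cases q) auto
  define W X where "W = wH (\<beta>, a)" and "X = xiH (\<beta>, a)"
  define f where "f z = (W + 2 * X * z) ^ p * (1 - z^2) ^ k" for z
  have "f holomorphic_on UNIV"
    unfolding f_def by (intro holomorphic_intros)
  then obtain F where F: "\<And>z. (F has_field_derivative f z) (at z)"
    using holomorphic_convex_primitive'[of UNIV f] by auto
  have "((\<lambda>s. f (of_real s)) has_integral F 1 - F (-1)) {-1..1}"
  proof -
    have "((\<lambda>s. F (of_real s)) has_vector_derivative f (of_real s)) (at s within {-1..1})" for s
      by (rule has_vector_derivative_at_within) (rule has_vector_derivative_real_field[OF F])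
    from fundamental_theorem_of_calculus[OF _ this] show ?thesis
      by simp
  qed
  moreover have "((\<lambda>t. zH \<beta> a t ^ p * zH_dot \<beta> a t ^ q) has_integral 2 * X^q * F 1 - 2 * X^q * F (-1)) UNIV"
  proof (rule fundamental_theorem_of_calculus_UNIV[where G = "\<lambda>t. 2 * X^q * F (sH a t)"])
    fix t
    have "((F \<circ> sH a) has_vector_derivative (1 - sH a t ^ 2) / 2 * f (sH a t)) (at t)"
      by (rule field_vector_diff_chain_at[OF sH_has_vector_derivative F])
    then have "((\<lambda>t. 2 * X^q * F (sH a t)) has_vector_derivative 2 * X^q * ((1 - sH a t ^ 2) / 2 * f (sH a t))) (at t)"
      unfolding o_def by (rule has_vector_derivative_mult_right)
    moreover have "2 * X^q * ((1 - sH a t ^ 2) / 2 * f (sH a t)) = zH \<beta> a t ^ p * zH_dot \<beta> a t ^ q"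
      unfolding zH_eq zH_dot_eq f_def W_def[symmetric] X_def[symmetric] q
      by (simp add: power_mult_distrib mult_ac)
    ultimately show "((\<lambda>t. 2 * X^q * F (sH a t)) has_vector_derivative zH \<beta> a t ^ p * zH_dot \<beta> a t ^ q) (at t)"
      by simp
  next
    have "isCont F z" for z
      using F by (rule DERIV_isCont)
    then show "((\<lambda>t. 2 * X^q * F (sH a t)) \<longlongrightarrow> 2 * X^q * F 1) at_top"
      and "((\<lambda>t. 2 * X^q * F (sH a t)) \<longlongrightarrow> 2 * X^q * F (-1)) at_bot"
      by (intro tendsto_mult_left isCont_tendsto_compose[of _ F] sH_tendsto_at_top sH_tendsto_at_bot; simp)+
  qed
  ultimately have "I_H p q (\<beta>, a) = 2 * X^q * integral {-1..1} (\<lambda>s. f (of_real s))"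
    unfolding I_H_def by (simp add: integral_unique right_diff_distrib)
  then show ?thesis
    by (simp add: f_def W_def X_def q)
qed

definition moment :: "nat \<Rightarrow> nat \<Rightarrow> real" where
  "moment j n = integral {-1..1} (\<lambda>s. s ^ j * (1 - s^2) ^ n)"

lemma has_integral_moment: "((\<lambda>s. s ^ j * (1 - s^2) ^ n) has_integral moment j n) {-1..1}"
  unfolding moment_def by (intro integrable_integral integrable_continuous_real continuous_intros)

lemma moment_odd:
  assumes "odd j"
  shows "moment j n = 0"
proof -
  have "((\<lambda>s. (- s) ^ j * (1 - (- s)^2) ^ n) has_integral moment j n) {-1..1}"
    using has_integral_reflect_real[THEN iffD2, OF has_integral_moment[of j n]] by simp
  then have "((\<lambda>s. - (s ^ j * (1 - s^2) ^ n)) has_integral moment j n) {-1..1}"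
    using assms by (simp add: power_minus_odd)
  then have "((\<lambda>s. s ^ j * (1 - s^2) ^ n) has_integral - moment j n) {-1..1}"
    by (simp add: has_integral_neg_iff)
  with has_integral_moment[of j n] show ?thesis
    by (metis has_integral_unique neg_equal_zero)
qed

lemma moment_0_nonzero: "moment 0 n \<noteq> 0"
proof
  assume "moment 0 n = 0"
  then have "((\<lambda>s::real. (1 - s^2) ^ n) has_integral 0) (cbox (-1) 1)"
    using has_integral_moment[of 0 n] by (simp add: cbox_interval)
  then have "(\<lambda>s::real. (1 - s^2) ^ n) 0 = 0"
  proof (rule has_integral_0_cbox_imp_0[rotated 2])
    show "continuous_on (cbox (-1) 1) (\<lambda>s::real. (1 - s^2) ^ n)"
      by (intro continuous_intros)
    show "0 \<le> (1 - x^2) ^ n" if "x \<in> box (-1) 1" for x :: real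
    proof -
      have "\<bar>x\<bar> \<le> 1"
        using that by (simp add: box_real abs_le_iff)
      then show ?thesis
        by (simp add: abs_square_le_1)
    qed
    show "box (-1) (1::real) \<noteq> {}" "(0::real) \<in> cbox (-1) 1"
      by (simp_all add: box_real cbox_interval)
  qed
  then show False by simp
qed

lemma I_H_binomial_expansion:
  assumes "q \<ge> 1"
  shows "I_H p q (\<beta>, a) = 2 * xiH (\<beta>, a) ^ q *
    (\<Sum>j\<le>p. of_nat (p choose j) * wH (\<beta>, a) ^ (p - j) * (2 * xiH (\<beta>, a)) ^ j * of_real (moment j (q - 1)))"
proof -
  define W X where "W = wH (\<beta>, a)" and "X = xiH (\<beta>, a)"
  have expand: "(W + 2 * X * of_real s) ^ p * (1 - of_real s ^ 2) ^ (q - 1)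
      = (\<Sum>j\<le>p. (of_nat (p choose j) * W ^ (p - j) * (2 * X) ^ j) * of_real (s ^ j * (1 - s^2) ^ (q - 1)))" for s
  proof -
    have "(W + 2 * X * of_real s) ^ p * (1 - of_real s ^ 2) ^ (q - 1) =
        (\<Sum>j\<le>p. of_nat (p choose j) * (2 * X * of_real s) ^ j * W ^ (p - j) * (1 - of_real s ^ 2) ^ (q - 1))"
      using binomial_ring[of "2 * X * of_real s" W p] by (simp add: add.commute sum_distrib_right)
    also have "\<dots> = (\<Sum>j\<le>p. (of_nat (p choose j) * W ^ (p - j) * (2 * X) ^ j) * of_real (s ^ j * (1 - s^2) ^ (q - 1)))"
      unfolding of_real_mult of_real_power of_real_diff of_real_1 power_mult_distrib
      by (simp only: mult_ac)
    finally show ?thesis .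
  qed
  have "((\<lambda>s. (W + 2 * X * of_real s) ^ p * (1 - of_real s ^ 2) ^ (q - 1)) has_integral
      (\<Sum>j\<le>p. (of_nat (p choose j) * W ^ (p - j) * (2 * X) ^ j) * of_real (moment j (q - 1)))) {-1..1}"
    unfolding expand
    by (intro has_integral_sum finite_atMost has_integral_mult_right has_integral_of_real has_integral_moment)
  then show ?thesis
    unfolding I_H_eq_segment_integral[OF assms] W_def X_def by (simp add: integral_unique)
qed

definition I_H_coeff :: "nat \<Rightarrow> nat \<Rightarrow> nat \<Rightarrow> complex" where
  "I_H_coeff r p m = (if p \<le> m then 2 * of_nat ((r - 2*p) choose (2*(m - p))) * 4 ^ (m - p)
     * of_real (moment (2*(m - p)) (2*p - 1)) else 0)"

lemma I_H_eq_sum_coeff: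
  assumes p: "p \<in> {1..r div 2}"
  shows "I_H (r - 2*p) (2*p) x = (\<Sum>m\<in>{1..r div 2}. I_H_coeff r p m * (xiH x ^ (2*m) * wH x ^ (r - 2*m)))"
proof -
  obtain \<beta> a where x: "x = (\<beta>, a)"
    by (cases x)
  define W X where "W = wH x" and "X = xiH x"
  define c where "c j = 2 * X ^ (2*p) * (of_nat ((r - 2*p) choose j) * W ^ (r - 2*p - j) * (2 * X) ^ j
      * of_real (moment j (2*p - 1)))" for j
  define h where "h m = I_H_coeff r p m * (X ^ (2*m) * W ^ (r - 2*m))" for m
  have "I_H (r - 2*p) (2*p) x = (\<Sum>j\<le>r - 2*p. c j)"
    using p by (simp add: x I_H_binomial_expansion c_def W_def X_def sum_distrib_left)
  also have "\<dots> = (\<Sum>k\<le>(r - 2*p) div 2. c (2*k))"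
    by (rule sum_atMost_even_terms) (simp add: c_def moment_odd)
  also have "\<dots> = (\<Sum>k\<le>r div 2 - p. h (p + k))"
  proof (rule sum.cong)
    show "{..(r - 2*p) div 2} = {..r div 2 - p}"
      by simp
    fix k
    have "r - 2*p - 2*k = r - 2*(p + k)"
      by simp
    moreover have "(2 * X) ^ (2*k) = 4 ^ k * X ^ (2*k)"
      by (simp add: power_mult_distrib power_mult)
    moreover have "X ^ (2*(p + k)) = X ^ (2*p) * X ^ (2*k)"
      by (simp add: distrib_left power_add)
    moreover have "I_H_coeff r p (p + k) = 2 * of_nat ((r - 2*p) choose (2*k)) * 4 ^ k * of_real (moment (2*k) (2*p - 1))"
      by (simp add: I_H_coeff_def)
    ultimately show "c (2*k) = h (p + k)"
      unfolding c_def h_def by (simp only: mult_ac)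
  qed
  also have "\<dots> = (\<Sum>m\<in>{1..r div 2}. h m)"
    by (rule sum_atMost_shift_eq_superset) (use p in \<open>auto simp: h_def I_H_coeff_def\<close>)
  finally show ?thesis
    by (simp add: h_def W_def X_def)
qed

lemma I_H_triangular:
  "triangular_combination (\<lambda>p. I_H (r - 2*p) (2*p)) (\<lambda>m x. xiH x ^ (2*m) * wH x ^ (r - 2*m))
    (\<lambda>m. r - 2*m) {1..r div 2}"
proof (rule triangular_combinationI[where T = "I_H_coeff r"])
  fix p assume "p \<in> {1..r div 2}"
  then show "I_H (r - 2*p) (2*p) = (\<lambda>x. \<Sum>m\<in>{1..r div 2}. I_H_coeff r p m * (xiH x ^ (2*m) * wH x ^ (r - 2*m)))"
    by (intro ext I_H_eq_sum_coeff)
  show "I_H_coeff r p p \<noteq> 0"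
    by (simp add: I_H_coeff_def moment_0_nonzero)
next
  fix p m assume "p \<in> {1..r div 2}" "m \<in> {1..r div 2}" "I_H_coeff r p m \<noteq> 0" "m \<noteq> p"
  then show "r - 2*m < r - 2*p"
    by (auto simp: I_H_coeff_def split: if_splits)
qed

section \<open>Chebyshev polynomials and the functions psi\<close>

lemma chebU_parity_expansion:
  "\<exists>c. c 0 = 2 ^ n \<and> (\<forall>x. chebU n x = (\<Sum>k\<le>n div 2. c k * x ^ (n - 2*k)))"
proof (induction n rule: induct_nat_012)
  case 0
  show ?case by (intro exI[of _ "\<lambda>_. 1"]) simp
next
  case 1
  show ?case by (intro exI[of _ "\<lambda>_. 2"]) simp
next
  case (ge2 n)
  obtain c0 where c0: "c0 0 = 2 ^ n" "\<And>x. chebU n x = (\<Sum>k\<le>n div 2. c0 k * x ^ (n - 2*k))"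
    using ge2.IH(1) by blast
  obtain c1 where c1: "c1 0 = 2 ^ Suc n"
    "\<And>x. chebU (Suc n) x = (\<Sum>k\<le>Suc n div 2. c1 k * x ^ (Suc n - 2*k))"
    using ge2.IH(2) by blast
  define c where "c k = 2 * (if k \<le> Suc n div 2 then c1 k else 0) - (if k = 0 then 0 else c0 (k - 1))" for k
  have "chebU (Suc (Suc n)) x = (\<Sum>k\<le>Suc (Suc n) div 2. c k * x ^ (Suc (Suc n) - 2*k))" for x
  proof -
    have "2 * x * chebU (Suc n) x = (\<Sum>k\<le>Suc n div 2. 2 * c1 k * x ^ (Suc (Suc n) - 2*k))"
      unfolding c1(2) sum_distrib_left by (rule sum.cong) (auto simp: Suc_diff_le)
    also have "\<dots> = (\<Sum>k\<le>Suc (n div 2). 2 * (if k \<le> Suc n div 2 then c1 k else 0) * x ^ (Suc (Suc n) - 2*k))"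
      by (rule sum.mono_neutral_cong_left) auto
    finally have A: "2 * x * chebU (Suc n) x = \<dots>" .
    have B: "chebU n x = (\<Sum>k\<le>Suc (n div 2). (if k = 0 then 0 else c0 (k - 1)) * x ^ (Suc (Suc n) - 2*k))"
      by (subst sum.atMost_Suc_shift) (simp add: c0(2) del: sum.atMost_Suc)
    have M: "Suc (Suc n) div 2 = Suc (n div 2)"
      by simp
    show ?thesis
      unfolding M c_def left_diff_distrib sum_subtractf A[symmetric] B[symmetric] by simp
  qed
  moreover have "c 0 = 2 ^ Suc (Suc n)"
    by (simp add: c_def c1(1))
  ultimately show ?case by blast
qed

definition chebU_coeff :: "nat \<Rightarrow> nat \<Rightarrow> real" where
  "chebU_coeff n = (SOME c. c 0 = 2 ^ n \<and> (\<forall>x. chebU n x = (\<Sum>k\<le>n div 2. c k * x ^ (n - 2*k))))"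

lemma chebU_coeff_0: "chebU_coeff n 0 = 2 ^ n"
  and chebU_eq_sum_coeff: "chebU n x = (\<Sum>k\<le>n div 2. chebU_coeff n k * x ^ (n - 2*k))"
  using someI_ex[OF chebU_parity_expansion[of n]] unfolding chebU_coeff_def[symmetric] by blast+

lemma psiH_eq:
  assumes "2 * p \<le> r"
  shows "psiH (r - 2*p) (- int p) (\<beta>, a)
    = of_real (muH a ^ 2) * cis (omegaH \<beta> a) ^ r * of_real (chebU (r - 2*p) (a * muH a) / pi)"
proof -
  have "cis ((of_nat (r - 2*p) - 2 * of_int (- int p)) * omegaH \<beta> a) = cis (omegaH \<beta> a) ^ r"
    using assms by (simp add: Complex.DeMoivre of_nat_diff algebra_simps)
  moreover have "a / sqrt (1 + a\<^sup>2) = a * muH a"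
    by (simp add: muH_def)
  ultimately show ?thesis
    by (simp only: psiH_def prod.case pH_def)
qed

lemma xiH_sq: "xiH (\<beta>, a) ^ 2 = - (1/4) * of_real (muH a ^ 2) * cis (omegaH \<beta> a) ^ 2"
  by (simp add: xiH_def power_mult_distrib power2_eq_square mult_ac)

lemma wH_sq_minus_4_xiH_sq: "wH (\<beta>, a) ^ 2 - 4 * xiH (\<beta>, a) ^ 2 = cis (omegaH \<beta> a) ^ 2"
proof -
  have "muH a ^ 2 * (1 + a^2) = 1"
    unfolding muH_def by (simp add: power_divide) (smt (verit) zero_le_power2)
  moreover have "wH (\<beta>, a) ^ 2 - 4 * xiH (\<beta>, a) ^ 2 = of_real (muH a ^ 2 * (1 + a^2)) * cis (omegaH \<beta> a) ^ 2"
    unfolding xiH_sq by (simp add: wH_def power_mult_distrib algebra_simps)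
  ultimately show ?thesis
    by simp
qed

lemma family4_eq:
  assumes "1 \<le> m" "2 * m \<le> r"
  shows "xiH (\<beta>, a) ^ 2 * wH (\<beta>, a) ^ (r - 2*m) * (wH (\<beta>, a) ^ 2 - 4 * xiH (\<beta>, a) ^ 2) ^ (m - 1)
    = (- 1) ^ Suc r / 4 * of_real (muH a ^ 2) * cis (omegaH \<beta> a) ^ r * of_real ((a * muH a) ^ (r - 2*m))"
proof -
  define E where "E = cis (omegaH \<beta> a)"
  have "(- 1 :: complex) ^ (r - 2*m) = (- 1) ^ r"
    using assms by (metis (no_types) le_add_diff_inverse2 power_add power_mult power_minus1_even mult_1_right)
  moreover have "E ^ 2 * E ^ (r - 2*m) * (E ^ 2) ^ (m - 1) = E ^ r"
  proof -
    have "2 + (r - 2*m) + 2 * (m - 1) = r"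
      using assms by simp
    then show ?thesis
      by (metis power_add power_mult)
  qed
  ultimately show ?thesis
    unfolding wH_sq_minus_4_xiH_sq unfolding xiH_sq E_def[symmetric]
    by (simp add: wH_def E_def[symmetric] power_mult_distrib power_minus' mult_ac)
qed

definition psiH_coeff :: "nat \<Rightarrow> nat \<Rightarrow> nat \<Rightarrow> complex" where
  "psiH_coeff r p m = (if p \<le> m then of_real (chebU_coeff (r - 2*p) (m - p) / pi) / ((- 1) ^ Suc r / 4) else 0)"

lemma psiH_eq_sum_coeff:
  assumes p: "p \<in> {1..r div 2}"
  shows "psiH (r - 2*p) (- int p) x = (\<Sum>m\<in>{1..r div 2}.
    psiH_coeff r p m * (xiH x ^ 2 * wH x ^ (r - 2*m) * (wH x ^ 2 - 4 * xiH x ^ 2) ^ (m - 1)))"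
proof -
  obtain \<beta> a where x: "x = (\<beta>, a)"
    by (cases x)
  define \<kappa> :: complex where "\<kappa> = (- 1) ^ Suc r / 4"
  define E where "E = of_real (muH a ^ 2) * cis (omegaH \<beta> a) ^ r"
  define y where "y = a * muH a"
  define h where "h m = psiH_coeff r p m * (xiH x ^ 2 * wH x ^ (r - 2*m) * (wH x ^ 2 - 4 * xiH x ^ 2) ^ (m - 1))" for m
  have \<kappa>: "\<kappa> \<noteq> 0"
    by (simp add: \<kappa>_def)
  have "(r - 2*p) div 2 = r div 2 - p"
    by (simp add: div_mult_self1 flip: diff_mult_distrib2)
  then have "chebU (r - 2*p) y / pi = (\<Sum>k\<le>r div 2 - p. chebU_coeff (r - 2*p) k * y ^ (r - 2*p - 2*k) / pi)"
    by (simp add: chebU_eq_sum_coeff sum_divide_distrib)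
  moreover have "2 * p \<le> r"
    using p by auto
  ultimately have "psiH (r - 2*p) (- int p) x
      = E * of_real (\<Sum>k\<le>r div 2 - p. chebU_coeff (r - 2*p) k * y ^ (r - 2*p - 2*k) / pi)"
    unfolding x E_def y_def by (simp add: psiH_eq)
  also have "\<dots> = (\<Sum>k\<le>r div 2 - p. h (p + k))"
    unfolding of_real_sum sum_distrib_left
  proof (rule sum.cong[OF refl])
    fix k assume "k \<in> {..r div 2 - p}"
    then have "1 \<le> p + k" "2 * (p + k) \<le> r"
      using p by auto
    then have "xiH x ^ 2 * wH x ^ (r - 2*(p + k)) * (wH x ^ 2 - 4 * xiH x ^ 2) ^ (p + k - 1)
        = \<kappa> * of_real (muH a ^ 2) * cis (omegaH \<beta> a) ^ r * of_real (y ^ (r - 2*(p + k)))"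
      unfolding x \<kappa>_def y_def by (rule family4_eq)
    moreover have "r - 2*p - 2*k = r - 2*(p + k)"
      "psiH_coeff r p (p + k) = of_real (chebU_coeff (r - 2*p) k / pi) / \<kappa>"
      by (simp_all add: psiH_coeff_def \<kappa>_def)
    ultimately show "E * of_real (chebU_coeff (r - 2*p) k * y ^ (r - 2*p - 2*k) / pi) = h (p + k)"
      using \<kappa> by (simp add: h_def E_def field_simps)
  qed
  also have "\<dots> = (\<Sum>m\<in>{1..r div 2}. h m)"
    by (rule sum_atMost_shift_eq_superset) (use p in \<open>auto simp: h_def psiH_coeff_def\<close>)
  finally show ?thesis
    unfolding h_def .
qed

lemma psiH_triangular:
  "triangular_combination (\<lambda>p. psiH (r - 2*p) (- int p))
    (\<lambda>m x. xiH x ^ 2 * wH x ^ (r - 2*m) * (wH x ^ 2 - 4 * xiH x ^ 2) ^ (m - 1)) (\<lambda>m. r - 2*m) {1..r div 2}"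
proof (rule triangular_combinationI[where T = "psiH_coeff r"])
  fix p assume "p \<in> {1..r div 2}"
  then show "psiH (r - 2*p) (- int p) = (\<lambda>x. \<Sum>m\<in>{1..r div 2}.
      psiH_coeff r p m * (xiH x ^ 2 * wH x ^ (r - 2*m) * (wH x ^ 2 - 4 * xiH x ^ 2) ^ (m - 1)))"
    by (intro ext psiH_eq_sum_coeff)
  show "psiH_coeff r p p \<noteq> 0"
    by (simp add: psiH_coeff_def chebU_coeff_0)
next
  fix p m assume "p \<in> {1..r div 2}" "m \<in> {1..r div 2}" "psiH_coeff r p m \<noteq> 0" "m \<noteq> p"
  then show "r - 2*m < r - 2*p"
    by (auto simp: psiH_coeff_def split: if_splits)
qed

lemma family4_binomial_expansion:
  fixes X W :: complex
  assumes p: "p \<in> {1..r div 2}"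
  shows "X ^ 2 * W ^ (r - 2*p) * (W ^ 2 - 4 * X ^ 2) ^ (p - 1) = (\<Sum>m\<in>{1..r div 2}.
    (if m \<le> p then of_nat ((p - 1) choose (m - 1)) * (- 4) ^ (m - 1) else 0) * (X ^ (2*m) * W ^ (r - 2*m)))"
proof -
  define h where "h m = (if m \<le> p then of_nat ((p - 1) choose (m - 1)) * (- 4) ^ (m - 1) else 0)
    * (X ^ (2*m) * W ^ (r - 2*m))" for m
  have "X ^ 2 * W ^ (r - 2*p) * (W ^ 2 - 4 * X ^ 2) ^ (p - 1)
      = (\<Sum>k\<le>p - 1. X ^ 2 * W ^ (r - 2*p) * (of_nat ((p - 1) choose k) * (- 4 * X ^ 2) ^ k * (W ^ 2) ^ (p - 1 - k)))"
    using binomial_ring[of "- 4 * X ^ 2" "W ^ 2" "p - 1"] by (simp add: sum_distrib_left)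
  also have "\<dots> = (\<Sum>k\<le>p - 1. h (1 + k))"
  proof (rule sum.cong[OF refl])
    fix k assume k: "k \<in> {..p - 1}"
    then have "r - 2*p + 2*(p - 1 - k) = r - 2*(1 + k)"
      using p by auto
    then have W: "W ^ (r - 2*p) * (W ^ 2) ^ (p - 1 - k) = W ^ (r - 2*(1 + k))"
      by (metis power_add power_mult)
    have X: "X ^ 2 * (X ^ 2) ^ k = X ^ (2*(1 + k))"
      by (simp add: power_mult[symmetric] power_add[symmetric])
    have "h (1 + k) = of_nat ((p - 1) choose k) * (- 4) ^ k * (X ^ (2*(1 + k)) * W ^ (r - 2*(1 + k)))"
      using k p by (simp add: h_def)
    then show "X ^ 2 * W ^ (r - 2*p) * (of_nat ((p - 1) choose k) * (- 4 * X ^ 2) ^ k * (W ^ 2) ^ (p - 1 - k))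
        = h (1 + k)"
      unfolding power_mult_distrib[of "- 4"] W[symmetric] X[symmetric] by (simp only: mult_ac)
  qed
  also have "\<dots> = (\<Sum>m\<in>{1..r div 2}. h m)"
    by (rule sum_atMost_shift_eq_superset) (use p in \<open>auto simp: h_def\<close>)
  finally show ?thesis
    unfolding h_def .
qed

lemma binomial_triangular:
  fixes X W :: "'a \<Rightarrow> complex"
  shows "triangular_combination (\<lambda>p x. X x ^ 2 * W x ^ (r - 2*p) * (W x ^ 2 - 4 * X x ^ 2) ^ (p - 1))
    (\<lambda>m x. X x ^ (2*m) * W x ^ (r - 2*m)) (\<lambda>m. m) {1..r div 2}"
proof -
  define T where "T p m = (if m \<le> p then of_nat ((p - 1) choose (m - 1)) * (- 4) ^ (m - 1) else 0 :: complex)" for p m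
  show ?thesis
  proof (rule triangular_combinationI[where T = T])
    fix p assume "p \<in> {1..r div 2}"
    then show "(\<lambda>x. X x ^ 2 * W x ^ (r - 2*p) * (W x ^ 2 - 4 * X x ^ 2) ^ (p - 1))
        = (\<lambda>x. \<Sum>m\<in>{1..r div 2}. T p m * (X x ^ (2*m) * W x ^ (r - 2*m)))"
      unfolding T_def by (intro ext family4_binomial_expansion)
    show "T p p \<noteq> 0"
      by (simp add: T_def)
  next
    fix p m assume "T p m \<noteq> 0" "m \<noteq> p"
    then show "m < p"
      by (auto simp: T_def split: if_splits)
  qed
qed

theorem lemma4p9:
  fixes r :: nat
  assumes "r \<ge> 2"
  defines "P \<equiv> {1 .. r div 2}"
  shows "fam_span (\<lambda>p. psiH (r - 2*p) (- int p)) P = fam_span (\<lambda>p. I_H (r - 2*p) (2*p)) P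
       \<and> fam_span (\<lambda>p. I_H (r - 2*p) (2*p)) P = fam_span (\<lambda>p x. xiH x ^ (2*p) * wH x ^ (r - 2*p)) P
       \<and> fam_span (\<lambda>p x. xiH x ^ (2*p) * wH x ^ (r - 2*p)) P
         = fam_span (\<lambda>p x. xiH x ^ 2 * wH x ^ (r - 2*p) * (wH x ^ 2 - 4 * xiH x ^ 2) ^ (p - 1)) P"
proof -
  have psi: "fam_span (\<lambda>p. psiH (r - 2*p) (- int p)) P
      = fam_span (\<lambda>p x. xiH x ^ 2 * wH x ^ (r - 2*p) * (wH x ^ 2 - 4 * xiH x ^ 2) ^ (p - 1)) P"
    unfolding P_def by (rule fam_span_eq_if_triangular[OF _ psiH_triangular]) simp
  have I: "fam_span (\<lambda>p. I_H (r - 2*p) (2*p)) P = fam_span (\<lambda>p x. xiH x ^ (2*p) * wH x ^ (r - 2*p)) P"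
    unfolding P_def by (rule fam_span_eq_if_triangular[OF _ I_H_triangular]) simp
  have binomial: "fam_span (\<lambda>p x. xiH x ^ 2 * wH x ^ (r - 2*p) * (wH x ^ 2 - 4 * xiH x ^ 2) ^ (p - 1)) P
      = fam_span (\<lambda>p x. xiH x ^ (2*p) * wH x ^ (r - 2*p)) P"
    unfolding P_def by (rule fam_span_eq_if_triangular[OF _ binomial_triangular]) simp
  show ?thesis
    using psi I binomial by simp
qed

end
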